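(* Let $A\in\mathbb{R}^{n\times n}$ be symmetric positive definite, $M_0\in\mathbb{R}^{n\times n}$, and let $(M_i,R_i,G_i,P_i)$ be the NCG sequence defined in the context (assumed not to break down). Then for $i=1,2,\dots$, $$M_i\in M_0+\mathcal{K}_i(A^2,G_0)\quad\text{and}\quad R_i=I_n-AM_i\perp\mathcal{K}_i(A^2,G_0),$$ where $\mathcal{K}_i(A^2,G_0)=\mathrm{span}\{G_0,A^2G_0,\dots,A^{2(i-1)}G_0\}$ and $G_0=-AR_0$. Moreover, the search directions $P_0,\dots,P_{i-1}$ form an $A$-orthogonal basis (i.e. $(P_j,AP_k)_F=0$ for $j\neq k$) of this Krylov subspace, and $$\mathrm{span}\{P_0,\dots,P_{i-1}\}=\mathrm{span}\{G_0,\dots,G_{i-1}\}=\mathcal{K}_i(A^2,G_0).$$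
   Context: The Frobenius inner product on $\mathbb{R}^{n\times n}$ is $(X,Y)_F=\operatorname{tr}(X^TY)$; orthogonality $\perp$ is with respect to it. The NCG method: given $M_0$, set $R_i:=I_n-AM_i$ and $G_i:=-AR_i$, $P_0:=-G_0$. For $i\ge1$, $P_i$ is the element of $-G_i+\mathrm{span}\{P_{i-1}\}$ with $(P_i,AP_{i-1})_F=0$. For $i\ge0$, $M_{i+1}$ is the element of $M_i+\mathrm{span}\{P_i\}$ such that $(I_n-AM_{i+1},P_i)_F=0$. It is assumed that the iteration does not break down ($R_i\neq0$, $P_i\neq0$ for all indices considered), so that the iterates are uniquely determined. *)

theory Defs
  imports "HOL-Analysis.Analysis"
begin

type_synonym 'n mat = "real^'n^'n"

definition mtrace :: "'n::finite mat \<Rightarrow> real" where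
  "mtrace X = (\<Sum>i\<in>UNIV. X $ i $ i)"

definition frob :: "'n::finite mat \<Rightarrow> 'n mat \<Rightarrow> real" where
  "frob X Y = mtrace (transpose X ** Y)"

primrec mpow :: "'n::finite mat \<Rightarrow> nat \<Rightarrow> 'n mat" where
  "mpow B 0 = mat 1"
| "mpow B (Suc k) = B ** mpow B k"

definition krylov :: "nat \<Rightarrow> 'n::finite mat \<Rightarrow> 'n mat \<Rightarrow> 'n mat set" where
  "krylov i B G = span {mpow B k ** G | k. k < i}"

definition spd :: "'n::finite mat \<Rightarrow> bool" where
  "spd A \<longleftrightarrow> transpose A = A \<and> (\<forall>x. x \<noteq> 0 \<longrightarrow> x \<bullet> (A *v x) > 0)"

text \<open>The NCG relations up to step i (M_0,...,M_i and P_0,...,P_(i-1)),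
  with R_j = I - A M_j and G_j = - A R_j.\<close>
definition ncg_seq :: "'n::finite mat \<Rightarrow> (nat \<Rightarrow> 'n mat) \<Rightarrow> (nat \<Rightarrow> 'n mat)
    \<Rightarrow> (nat \<Rightarrow> 'n mat) \<Rightarrow> (nat \<Rightarrow> 'n mat) \<Rightarrow> nat \<Rightarrow> bool" where
  "ncg_seq A M R G P i \<longleftrightarrow>
     (\<forall>j. R j = mat 1 - A ** M j) \<and>
     (\<forall>j. G j = - (A ** R j)) \<and>
     P 0 = - G 0 \<and>
     (\<forall>j. 1 \<le> j \<and> j < i \<longrightarrow>
        P j \<in> {- G j + Y | Y. Y \<in> span {P (j - 1)}} \<and> frob (P j) (A ** P (j - 1)) = 0) \<and>
     (\<forall>j<i. M (Suc j) \<in> {M j + Y | Y. Y \<in> span {P j}} \<and>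
        frob (mat 1 - A ** M (Suc j)) (P j) = 0)"

end

theory Submission imports Defs begin

text \<open>
  Write \<open>K\<^sub>m\<close> for \<open>K\<^sub>m(A\<^sup>2, G\<^sub>0)\<close> and \<open>\<alpha>\<^sub>j\<close>, \<open>\<beta>\<^sub>j\<close> for the coefficients hidden in the
  spans of \<^const>\<open>ncg_seq\<close>. Since \<open>G\<^sub>j\<^sub>+\<^sub>1 = G\<^sub>j + \<alpha>\<^sub>j A\<^sup>2 P\<^sub>j\<close> and
  \<open>P\<^sub>j\<^sub>+\<^sub>1 = -G\<^sub>j\<^sub>+\<^sub>1 + \<beta>\<^sub>j P\<^sub>j\<close>, an induction puts \<open>P\<^sub>j\<close> and \<open>G\<^sub>j\<close> into \<open>K\<^sub>j\<^sub>+\<^sub>1\<close>.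
  The heart of the proof is the simultaneous induction on \<open>m\<close> showing that
  \<open>P\<^sub>0, \<dots>, P\<^sub>m\<^sub>-\<^sub>1\<close> are \<open>A\<close>-conjugate and \<open>R\<^sub>m \<perp> P\<^sub>0, \<dots>, P\<^sub>m\<^sub>-\<^sub>1\<close>. Conjugate nonzero
  directions are independent, so by counting dimensions they span \<open>K\<^sub>m\<close>. For
  \<open>k + 1 < m\<close> we then get \<open>A\<^sup>2 P\<^sub>k \<in> K\<^sub>m \<perp> R\<^sub>m\<close>, i.e. \<open>(G\<^sub>m, A P\<^sub>k) = 0\<close>, which together
  with the explicit conjugacy of consecutive directions gives \<open>(P\<^sub>m, A P\<^sub>k) = 0\<close>;
  the update \<open>R\<^sub>m\<^sub>+\<^sub>1 = R\<^sub>m - \<alpha>\<^sub>m A P\<^sub>m\<close> then keeps \<open>R\<^sub>m\<^sub>+\<^sub>1\<close> orthogonal to the old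
  directions, and to \<open>P\<^sub>m\<close> by the choice of \<open>\<alpha>\<^sub>m\<close>.
\<close>

lemma frob_eq_inner: "frob X Y = X \<bullet> Y"
  unfolding frob_def mtrace_def matrix_matrix_mult_def transpose_def inner_vec_def
  by simp (rule sum.swap)

lemma linear_matrix_matrix_mult_left: "linear (\<lambda>X. (B::real^'n^'m) ** X)"
proof (rule linearI)
  show "B ** (X + Y) = B ** X + B ** Y" for X Y :: "real^'p^'n"
    by (rule matrix_add_ldistrib)
  show "B ** (c *\<^sub>R X) = c *\<^sub>R (B ** X)" for c and X :: "real^'p^'n"
    using matrix_scalar_ac[of B c X] scalar_matrix_assoc[of c B X] by simp
qed

lemma symmetric_matrix_mult_inner:
  fixes A X Y :: "'n::finite mat"
  assumes "transpose A = A"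
  shows "(A ** X) \<bullet> Y = X \<bullet> (A ** Y)"
  using assms by (simp add: frob_eq_inner[symmetric] frob_def matrix_transpose_mul matrix_mul_assoc)

lemma inner_matrix_mult_columns:
  fixes A X :: "'n::finite mat"
  shows "X \<bullet> (A ** X) = (\<Sum>j\<in>UNIV. column j X \<bullet> (A *v column j X))"
  unfolding inner_vec_def matrix_matrix_mult_def matrix_vector_mult_def column_def
  by simp (rule sum.swap)

lemma spd_inner_matrix_mult_pos:
  fixes A X :: "'n::finite mat"
  assumes "spd A" and "X \<noteq> 0"
  shows "0 < X \<bullet> (A ** X)"
proof -
  obtain i j where "X $ i $ j \<noteq> 0"
    using \<open>X \<noteq> 0\<close> by (metis vec_eq_iff zero_index)
  then have "column j X \<noteq> 0"
    by (metis column_def vec_lambda_beta zero_index)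
  with \<open>spd A\<close> have "0 < column j X \<bullet> (A *v column j X)"
    by (simp add: spd_def)
  moreover have "0 \<le> column k X \<bullet> (A *v column k X)" for k
    using \<open>spd A\<close> unfolding spd_def by (metis inner_zero_left less_le order_refl)
  ultimately show ?thesis
    unfolding inner_matrix_mult_columns by (intro sum_pos2[of UNIV j]) auto
qed

lemma subspace_krylov: "subspace (krylov m B G)"
  unfolding krylov_def by (rule subspace_span)

lemma krylov_mono: "m \<le> m' \<Longrightarrow> krylov m B G \<subseteq> krylov m' B G"
  unfolding krylov_def by (rule span_mono) auto

lemma start_in_krylov: "G \<in> krylov (Suc m) B G"
  unfolding krylov_def by (rule span_base) (auto intro!: exI[of _ 0])

lemma matrix_mult_in_krylov:
  assumes "X \<in> krylov m B G"
  shows "B ** X \<in> krylov (Suc m) B G"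
proof -
  have "B ** X \<in> (\<lambda>X. B ** X) ` krylov m B G"
    using assms by blast
  also have "\<dots> = span ((\<lambda>X. B ** X) ` {mpow B k ** G | k. k < m})"
    unfolding krylov_def by (rule linear_span_image[OF linear_matrix_matrix_mult_left, symmetric])
  also have "\<dots> \<subseteq> krylov (Suc m) B G"
    unfolding krylov_def
  proof (rule span_mono, rule image_subsetI)
    fix X assume "X \<in> {mpow B k ** G | k. k < m}"
    then obtain k where "k < m" and "B ** X = mpow B (Suc k) ** G"
      by (auto simp: matrix_mul_assoc)
    then show "B ** X \<in> {mpow B k ** G | k. k < Suc m}"
      by blast
  qed
  finally show ?thesis .
qed

lemma dim_krylov_le: "dim (krylov m B G) \<le> m"
proof -
  have gens: "{mpow B k ** G | k. k < m} = (\<lambda>k. mpow B k ** G) ` {..<m}"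
    by auto
  have "dim (krylov m B G) \<le> card {mpow B k ** G | k. k < m}"
    unfolding krylov_def gens by (rule dim_le_card) auto
  also have "\<dots> \<le> m"
    unfolding gens by (metis card_image_le card_lessThan finite_lessThan)
  finally show ?thesis .
qed

definition conjugate_on :: "'n::finite mat \<Rightarrow> 'a set \<Rightarrow> ('a \<Rightarrow> 'n mat) \<Rightarrow> bool" where
  "conjugate_on A I Q \<longleftrightarrow> (\<forall>j\<in>I. \<forall>k\<in>I. j \<noteq> k \<longrightarrow> Q j \<bullet> (A ** Q k) = 0)"

lemma conjugate_on_insert:
  assumes "transpose A = A" and "conjugate_on A I Q" and "\<forall>k\<in>I. Q m \<bullet> (A ** Q k) = 0"
  shows "conjugate_on A (insert m I) Q"
  unfolding conjugate_on_def
proof (intro ballI impI)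
  fix j k assume "j \<in> insert m I" "k \<in> insert m I" "j \<noteq> k"
  moreover have "Q j \<bullet> (A ** Q m) = Q m \<bullet> (A ** Q j)"
    using symmetric_matrix_mult_inner[OF \<open>transpose A = A\<close>, of "Q m" "Q j"]
    by (simp add: inner_commute)
  ultimately show "Q j \<bullet> (A ** Q k) = 0"
    using assms(2,3) unfolding conjugate_on_def by auto
qed

lemma conjugate_on_inj_on:
  assumes "spd A" and "conjugate_on A I Q" and "\<forall>j\<in>I. Q j \<noteq> 0"
  shows "inj_on Q I"
proof (rule inj_onI, rule ccontr)
  fix j k
  assume "j \<in> I" "k \<in> I" "Q j = Q k" "j \<noteq> k"
  have "Q j \<bullet> (A ** Q k) = 0"
    using \<open>conjugate_on A I Q\<close> \<open>j \<in> I\<close> \<open>k \<in> I\<close> \<open>j \<noteq> k\<close>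
    by (simp add: conjugate_on_def)
  then have "Q j \<bullet> (A ** Q j) = 0"
    using \<open>Q j = Q k\<close> by simp
  moreover have "0 < Q j \<bullet> (A ** Q j)"
    using spd_inner_matrix_mult_pos[OF \<open>spd A\<close>] assms(3) \<open>j \<in> I\<close> by blast
  ultimately show False
    by simp
qed

lemma conjugate_on_independent:
  assumes "spd A" and "finite I" and "conjugate_on A I Q" and "\<forall>j\<in>I. Q j \<noteq> 0"
  shows "independent (Q ` I)"
proof (rule independent_if_scalars_zero)
  fix f and v assume sum0: "(\<Sum>w\<in>Q ` I. f w *\<^sub>R w) = 0" and "v \<in> Q ` I"
  from \<open>v \<in> Q ` I\<close> obtain k where k: "k \<in> I" "v = Q k"
    by blast
  have others: "w \<bullet> (A ** v) = 0" if w: "w \<in> Q ` I - {v}" for w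
  proof -
    obtain j where "j \<in> I" "w = Q j" "j \<noteq> k"
      using w k by blast
    then show ?thesis
      using k \<open>conjugate_on A I Q\<close> by (simp add: conjugate_on_def)
  qed
  have "0 = (\<Sum>w\<in>Q ` I. f w *\<^sub>R w) \<bullet> (A ** v)"
    using sum0 by simp
  also have "\<dots> = (\<Sum>w\<in>Q ` I. f w * (w \<bullet> (A ** v)))"
    by (simp add: inner_sum_left)
  also have "\<dots> = f v * (v \<bullet> (A ** v)) + (\<Sum>w\<in>Q ` I - {v}. f w * (w \<bullet> (A ** v)))"
    using \<open>v \<in> Q ` I\<close> \<open>finite I\<close> by (intro sum.remove) auto
  also have "\<dots> = f v * (v \<bullet> (A ** v))"
    using others by simp
  finally have "0 = f v * (v \<bullet> (A ** v))" .
  moreover have "0 < v \<bullet> (A ** v)"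
    using spd_inner_matrix_mult_pos[OF \<open>spd A\<close>] assms(4) k by auto
  ultimately show "f v = 0"
    by simp
qed (simp add: \<open>finite I\<close>)

locale ncg_iteration =
  fixes A :: "'n::finite mat" and M R G P :: "nat \<Rightarrow> 'n mat"
    and \<alpha> \<beta> :: "nat \<Rightarrow> real" and i :: nat
  assumes spd: "spd A"
    and residual: "\<And>j. R j = mat 1 - A ** M j"
    and gradient: "\<And>j. G j = - (A ** R j)"
    and direction_0: "P 0 = - G 0"
    and direction_Suc: "\<And>j. Suc j < i \<Longrightarrow> P (Suc j) = - G (Suc j) + \<beta> j *\<^sub>R P j"
    and direction_Suc_conj: "\<And>j. Suc j < i \<Longrightarrow> P (Suc j) \<bullet> (A ** P j) = 0"
    and iterate_Suc: "\<And>j. j < i \<Longrightarrow> M (Suc j) = M j + \<alpha> j *\<^sub>R P j"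
    and residual_Suc_orth: "\<And>j. j < i \<Longrightarrow> R (Suc j) \<bullet> P j = 0"
    and direction_nonzero: "\<And>j. j < i \<Longrightarrow> P j \<noteq> 0"
begin

abbreviation K :: "nat \<Rightarrow> 'n mat set" where
  "K m \<equiv> krylov m (A ** A) (G 0)"

lemma symmetric: "transpose A = A"
  using spd by (simp add: spd_def)

lemma residual_Suc:
  assumes "j < i"
  shows "R (Suc j) = R j - \<alpha> j *\<^sub>R (A ** P j)"
  using iterate_Suc[OF assms]
  by (simp add: residual matrix_add_ldistrib matrix_scalar_ac scalar_matrix_assoc)

lemma gradient_Suc:
  assumes "j < i"
  shows "G (Suc j) = G j + \<alpha> j *\<^sub>R ((A ** A) ** P j)"
  using residual_Suc[OF assms]
  by (simp add: gradient real_vector.linear_diff[OF linear_matrix_matrix_mult_left]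
      real_vector.linear_scale[OF linear_matrix_matrix_mult_left] matrix_mul_assoc)

lemma direction_gradient_in_krylov: "j < i \<Longrightarrow> P j \<in> K (Suc j) \<and> G j \<in> K (Suc j)"
proof (induction j)
  case 0
  then show ?case
    using start_in_krylov[of "G 0" 0] by (simp add: direction_0 span_neg krylov_def)
next
  case (Suc j)
  then have IH: "P j \<in> K (Suc (Suc j))" "G j \<in> K (Suc (Suc j))"
    using krylov_mono[of "Suc j" "Suc (Suc j)"] by auto
  have "(A ** A) ** P j \<in> K (Suc (Suc j))"
    using Suc by (simp add: matrix_mult_in_krylov)
  with IH have "G (Suc j) \<in> K (Suc (Suc j))"
    using Suc.prems gradient_Suc[of j]
    by (simp add: subspace_add subspace_scale subspace_krylov)
  with IH show ?case
    using Suc.prems direction_Suc[of j]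
    by (simp add: subspace_diff subspace_scale subspace_krylov)
qed

lemma gradient_in_span_directions:
  assumes "j < i"
  shows "G j \<in> span (P ` {..j})"
proof (cases j)
  case 0
  then show ?thesis
    using span_neg[OF span_base, of "P 0" "P ` {..0}"] by (simp add: direction_0)
next
  case (Suc j')
  have "G j = - P j + \<beta> j' *\<^sub>R P j'"
    using direction_Suc[of j'] assms Suc by simp
  then show ?thesis
    using Suc by (simp add: span_diff span_scale span_base)
qed

lemma direction_in_span_gradients: "j < i \<Longrightarrow> P j \<in> span (G ` {..j})"
proof (induction j)
  case 0
  then show ?case
    using span_neg[OF span_base, of "G 0" "G ` {..0}"] by (simp add: direction_0)
next
  case (Suc j)
  have "span (G ` {..j}) \<subseteq> span (G ` {..Suc j})"
    by (rule span_mono) auto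
  then have "P j \<in> span (G ` {..Suc j})"
    using Suc by auto
  then show ?case
    using Suc.prems direction_Suc[of j] by (simp add: span_diff span_scale span_base)
qed

lemma span_directions_eq_span_gradients: "span (P ` {..<i}) = span (G ` {..<i})"
  unfolding span_eq
proof (intro conjI image_subsetI)
  fix j assume "j \<in> {..<i}"
  moreover have "span (G ` {..j}) \<subseteq> span (G ` {..<i})" and "span (P ` {..j}) \<subseteq> span (P ` {..<i})"
    using \<open>j \<in> {..<i}\<close> by (auto intro!: span_mono)
  ultimately show "P j \<in> span (G ` {..<i})" and "G j \<in> span (P ` {..<i})"
    using direction_in_span_gradients gradient_in_span_directions by auto
qed

lemma krylov_eq_span_directions:
  assumes "m \<le> i" and "conjugate_on A {..<m} P"
  shows "K m = span (P ` {..<m})"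
proof
  have directions: "P ` {..<m} \<subseteq> K m"
  proof (rule image_subsetI)
    fix j assume "j \<in> {..<m}"
    then show "P j \<in> K m"
      using assms(1) direction_gradient_in_krylov[of j] krylov_mono[of "Suc j" m] by auto
  qed
  then show "span (P ` {..<m}) \<subseteq> K m"
    by (simp add: span_minimal subspace_krylov)
  have nonzero: "\<forall>j\<in>{..<m}. P j \<noteq> 0"
    using assms(1) direction_nonzero by auto
  have "dim (K m) \<le> card (P ` {..<m})"
    using dim_krylov_le conjugate_on_inj_on[OF spd assms(2) nonzero] by (simp add: card_image)
  then show "K m \<subseteq> span (P ` {..<m})"
    using card_ge_dim_independent[OF directions] conjugate_on_independent[OF spd _ assms(2) nonzero]
    by simp
qed

lemma direction_conj_step:
  assumes "m < i" and "conjugate_on A {..<m} P" and "\<forall>k<m. R m \<bullet> P k = 0" and "k < m"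
  shows "P m \<bullet> (A ** P k) = 0"
proof -
  obtain j where m: "m = Suc j"
    using \<open>k < m\<close> by (cases m) auto
  show ?thesis
  proof (cases "k = j")
    case True
    then show ?thesis
      using direction_Suc_conj \<open>m < i\<close> m by simp
  next
    case False
    then have "Suc (Suc k) \<le> m"
      using \<open>k < m\<close> m by simp
    have "P k \<in> K (Suc k)"
      using direction_gradient_in_krylov[of k] \<open>k < m\<close> \<open>m < i\<close> by simp
    then have "(A ** A) ** P k \<in> K (Suc (Suc k))"
      by (rule matrix_mult_in_krylov)
    also have "\<dots> \<subseteq> K m"
      using \<open>Suc (Suc k) \<le> m\<close> by (rule krylov_mono)
    also have "\<dots> = span (P ` {..<m})"
      using krylov_eq_span_directions \<open>m < i\<close> assms(2) by simp
    finally have "(A ** A) ** P k \<in> span (P ` {..<m})" .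
    then have "R m \<bullet> ((A ** A) ** P k) = 0"
      using assms(3) orthogonal_to_span[unfolded orthogonal_def] by blast
    then have "G m \<bullet> (A ** P k) = 0"
      by (simp add: gradient symmetric_matrix_mult_inner[OF symmetric] matrix_mul_assoc)
    moreover have "P j \<bullet> (A ** P k) = 0"
      using \<open>conjugate_on A {..<m} P\<close> False \<open>k < m\<close> m by (simp add: conjugate_on_def)
    ultimately show ?thesis
      using direction_Suc[of j] \<open>m < i\<close> m by (simp add: inner_diff_left)
  qed
qed

lemma residual_orth_step:
  assumes "m < i" and "\<forall>k<m. R m \<bullet> P k = 0" and "\<forall>k<m. P m \<bullet> (A ** P k) = 0"
    and "k < Suc m"
  shows "R (Suc m) \<bullet> P k = 0"
proof (cases "k = m")
  case True
  then show ?thesis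
    using residual_Suc_orth \<open>m < i\<close> by simp
next
  case False
  then show ?thesis
    using assms residual_Suc[of m]
    by (simp add: inner_diff_left symmetric_matrix_mult_inner[OF symmetric])
qed

lemma conjugate_and_residual_orth:
  "m \<le> i \<Longrightarrow> conjugate_on A {..<m} P \<and> (\<forall>k<m. R m \<bullet> P k = 0)"
proof (induction m)
  case 0
  then show ?case
    by (simp add: conjugate_on_def)
next
  case (Suc m)
  then have conj: "conjugate_on A {..<m} P" and orth: "\<forall>k<m. R m \<bullet> P k = 0"
    by auto
  have new: "\<forall>k<m. P m \<bullet> (A ** P k) = 0"
    using direction_conj_step[OF _ conj orth] Suc.prems by simp
  show ?case
    using conjugate_on_insert[OF symmetric conj] new residual_orth_step[OF _ orth new] Suc.prems
    by (simp add: lessThan_Suc)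
qed

lemma iterate_in_span_directions: "m \<le> i \<Longrightarrow> M m - M 0 \<in> span (P ` {..<m})"
proof (induction m)
  case 0
  then show ?case
    by (simp add: span_zero)
next
  case (Suc m)
  moreover have "span (P ` {..<m}) \<subseteq> span (P ` {..<Suc m})"
    by (rule span_mono) auto
  ultimately have "M m - M 0 \<in> span (P ` {..<Suc m})"
    by auto
  then have "(M m - M 0) + \<alpha> m *\<^sub>R P m \<in> span (P ` {..<Suc m})"
    by (simp add: span_add span_scale span_base)
  then show ?case
    using iterate_Suc[of m] Suc.prems by (simp add: algebra_simps)
qed

end

lemma ncg_seq_iteration:
  assumes "spd A" and "ncg_seq A M R G P i" and "\<forall>j<i. P j \<noteq> 0"
  obtains \<alpha> \<beta> where "ncg_iteration A M R G P \<alpha> \<beta> i"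
proof -
  from assms(2) have
    R: "\<And>j. R j = mat 1 - A ** M j" and G: "\<And>j. G j = - (A ** R j)" and P0: "P 0 = - G 0" and
    P: "\<And>j. Suc j < i \<Longrightarrow> P (Suc j) \<in> {- G (Suc j) + Y | Y. Y \<in> span {P j}}
      \<and> frob (P (Suc j)) (A ** P j) = 0" and
    M: "\<And>j. j < i \<Longrightarrow> M (Suc j) \<in> {M j + Y | Y. Y \<in> span {P j}}
      \<and> frob (mat 1 - A ** M (Suc j)) (P j) = 0"
    unfolding ncg_seq_def by auto
  have "\<forall>j. \<exists>c. Suc j < i \<longrightarrow> P (Suc j) = - G (Suc j) + c *\<^sub>R P j"
    using P by (auto simp: span_singleton)
  then obtain \<beta> where "\<And>j. Suc j < i \<Longrightarrow> P (Suc j) = - G (Suc j) + \<beta> j *\<^sub>R P j"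
    by metis
  moreover have "\<forall>j. \<exists>c. j < i \<longrightarrow> M (Suc j) = M j + c *\<^sub>R P j"
    using M by (auto simp: span_singleton)
  then obtain \<alpha> where "\<And>j. j < i \<Longrightarrow> M (Suc j) = M j + \<alpha> j *\<^sub>R P j"
    by metis
  ultimately have "ncg_iteration A M R G P \<alpha> \<beta> i"
    using assms(1,3) R G P0 P M by unfold_locales (simp_all add: frob_eq_inner)
  then show thesis ..
qed

theorem proposition2:
  fixes A :: "real^'n^'n" and M R G P :: "nat \<Rightarrow> real^'n^'n" and i :: nat
  assumes "spd A"
    and "ncg_seq A M R G P i"
    and "\<forall>j<i. R j \<noteq> 0 \<and> P j \<noteq> 0"
    and "i \<ge> 1"
  shows "M i \<in> {M 0 + Y | Y. Y \<in> krylov i (A ** A) (G 0)}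
     \<and> (\<forall>X\<in>krylov i (A ** A) (G 0). frob (R i) X = 0)
     \<and> (\<forall>j<i. \<forall>k<i. j \<noteq> k \<longrightarrow> frob (P j) (A ** P k) = 0)
     \<and> inj_on P {..<i} \<and> independent (P ` {..<i})
     \<and> span (P ` {..<i}) = span (G ` {..<i})
     \<and> span (G ` {..<i}) = krylov i (A ** A) (G 0)"
proof -
  obtain \<alpha> \<beta> where "ncg_iteration A M R G P \<alpha> \<beta> i"
    using ncg_seq_iteration assms(1-3) by blast
  then interpret ncg_iteration A M R G P \<alpha> \<beta> i .
  have conj: "conjugate_on A {..<i} P" and orth: "\<forall>k<i. R i \<bullet> P k = 0"
    using conjugate_and_residual_orth by auto
  have nonzero: "\<forall>j\<in>{..<i}. P j \<noteq> 0"
    using direction_nonzero by auto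
  have K: "K i = span (P ` {..<i})"
    using krylov_eq_span_directions[OF order_refl conj] .
  have "M i - M 0 \<in> K i"
    using iterate_in_span_directions K by simp
  then have "M i \<in> {M 0 + Y | Y. Y \<in> K i}"
    by (intro CollectI exI[of _ "M i - M 0"]) simp
  moreover have "frob (R i) X = 0" if "X \<in> K i" for X
    using orthogonal_to_span[of X "P ` {..<i}" "R i"] that orth
    unfolding K orthogonal_def frob_eq_inner by blast
  ultimately show ?thesis
    using conj conjugate_on_inj_on[OF spd conj nonzero]
      conjugate_on_independent[OF spd _ conj nonzero] span_directions_eq_span_gradients K
    by (auto simp: conjugate_on_def frob_eq_inner)
qed

end
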